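(* Let $d>0$ be a constant, $k,b:\mathbb{R}_+\to\mathbb{R}_+$ measurable with $\int_0^{+\infty}k=+\infty$, $b\in L^\infty(\mathbb{R}_+)$, and $1<\int_0^{+\infty}b(a)e^{-\int_0^ak}da<+\infty$. Let $\eta_1,\eta_2,c_1,c_2,\tilde c_1,\tilde c_2\ge0$ with $\eta_1>0$, and $c_1^{tot}=\eta_1+c_1$, $c_2^{tot}=\eta_2+c_2$. Let $(N_1^*,N_2^* )$ be the population sizes ($N_1^*=\int n_1^*$) of the unique non-trivial nonnegative steady state of system (S): $$\partial_tn_1+\partial_an_1=-\big(k(a)+c_1^{tot}N_1+c_2^{tot}N_2\big)n_1,\quad n_1(t,0)=\int_0^{+\infty}bn_1da,$$ $$\frac{dN_2}{dt}=-(d+\tilde c_1N_1+\tilde c_2N_2)N_2+\int_0^{+\infty}(k(a)+\eta_1N_1+\eta_2N_2)n_1da,$$ and let $(N_1^{**},N_2^{**})$ be those of the unique non-trivial nonnegative steady state of system (S'), obtained from (S) by keeping the same phase-1 competition $c_1^{tot}N_1+c_2^{tot}N_2$ but removing competition-driven transition, i.e. with the last equation replaced by $$\frac{dN_2}{dt}=-(d+\tilde c_1N_1+\tilde c_2N_2)N_2+\int_0^{+\infty}k(a)n_1da,$$ where in both systems $N_1=\int_0^{+\infty}n_1da$. Then $N_1^{**}\ge N_1^*$ and $N_2^{**}\le N_2^*$. Furthermore, $c_2^{tot}\le c_1^{tot}$ if and only if $N_1^{**}+N_2^{**}\le N_1^*+N_2^*$. *)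

theory Defs
  imports "HOL-Analysis.Analysis"
begin

definition cumk :: "(real \<Rightarrow> real) \<Rightarrow> real \<Rightarrow> ennreal" where
  "cumk k a = (\<integral>\<^sup>+ x\<in>{0..a}. ennreal (k x) \<partial>lborel)"

definition surv :: "(real \<Rightarrow> real) \<Rightarrow> real \<Rightarrow> real" where
  "surv k a = (if cumk k a = \<infinity> then 0 else exp (- enn2real (cumk k a)))"

definition popsize :: "(real \<Rightarrow> real) \<Rightarrow> real" where
  "popsize n = (LINT a:{0..}|lborel. n a)"

text \<open>Nonnegative steady state (n1, N2) of system (S) (with_trans = True) or (S') (with_trans = False).
  The age-structured equation is taken in its (mild) integrated form along characteristics:
  n1(a) = n1(0) exp(-int_0^a k - C a), with n1(0) = int b n1 and C = c1tot N1 + c2tot N2.\<close>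
definition steady_state ::
  "(real \<Rightarrow> real) \<Rightarrow> (real \<Rightarrow> real) \<Rightarrow> real \<Rightarrow> real \<Rightarrow> real \<Rightarrow> real \<Rightarrow> real \<Rightarrow> real \<Rightarrow> real
   \<Rightarrow> bool \<Rightarrow> (real \<Rightarrow> real) \<Rightarrow> real \<Rightarrow> bool" where
  "steady_state k b d eta1 eta2 c1 c2 ct1 ct2 with_trans n1 N2 \<longleftrightarrow>
     (\<forall>a\<ge>0. n1 a \<ge> 0) \<and> N2 \<ge> 0 \<and> set_integrable lborel {0..} n1 \<and>
     (let N1 = popsize n1;
          C = (eta1 + c1) * N1 + (eta2 + c2) * N2;
          B = (\<integral>\<^sup>+ a\<in>{0..}. ennreal (b a * n1 a) \<partial>lborel)
      in B < \<infinity> \<and>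
         (\<forall>a\<ge>0. n1 a = enn2real B * surv k a * exp (- C * a)) \<and>
         ennreal ((d + ct1 * N1 + ct2 * N2) * N2) =
           (\<integral>\<^sup>+ a\<in>{0..}. ennreal ((k a + (if with_trans then eta1 * N1 + eta2 * N2 else 0)) * n1 a) \<partial>lborel))"

definition nontrivial :: "(real \<Rightarrow> real) \<Rightarrow> real \<Rightarrow> bool" where
  "nontrivial n1 N2 \<longleftrightarrow> (\<exists>a\<ge>0. n1 a \<noteq> 0) \<or> N2 \<noteq> 0"

end

theory Submission
  imports Defs
begin

(* In a nontrivial steady state the age profile is n1(a) = beta surv(a) exp(-C a), where C is the
   total competition pressure on phase 1. Integrating the boundary condition gives the
   characteristic equation int b surv exp(-C a) = 1, whose left-hand side is strictly decreasing
   in C. Hence (S) and (S') share the same C, and their profiles are proportional: n1** = l n1*.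
   Equal C means that c1tot times the gain N1** - N1* equals c2tot times the loss N2* - N2**.
   If N2** >= N2* then l <= 1, and the N2-balance of (S'), whose inflow is l times the ageing
   inflow of (S) without its positive transition term, cannot hold. So N2** < N2*, and the
   remaining claims follow from the exchange relation. *)

lemma cumk_mono: "a \<le> a' \<Longrightarrow> cumk k a \<le> cumk k a'"
  unfolding cumk_def by (intro nn_integral_mono) (auto split: split_indicator)

lemma surv_nonneg: "0 \<le> surv k a"
  by (simp add: surv_def)

lemma surv_antimono: "a \<le> a' \<Longrightarrow> surv k a' \<le> surv k a"
  using cumk_mono[of a a' k]
  by (auto simp: surv_def top_unique enn2real_mono top.not_eq_extremum)

lemma borel_measurable_surv: "surv k \<in> borel_measurable borel"
proof -
  have "mono (\<lambda>a. - surv k a)"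
    by (auto simp: mono_def intro: surv_antimono)
  then have "(\<lambda>a. - (- surv k a)) \<in> borel_measurable borel"
    using borel_measurable_mono by measurable
  then show ?thesis by simp
qed

lemma set_borel_measurable_ennreal:
  fixes f :: "'a \<Rightarrow> real"
  assumes "set_borel_measurable M A f"
  shows "(\<lambda>x. ennreal (f x) * indicator A x) \<in> borel_measurable M"
proof -
  have "(\<lambda>x. ennreal (indicator A x *\<^sub>R f x)) \<in> borel_measurable M"
    using assms unfolding set_borel_measurable_def by measurable
  then show ?thesis
    by (rule measurable_cong[THEN iffD1, rotated]) (simp split: split_indicator)
qed

lemma set_borel_measurable_mult:
  fixes f g :: "'a \<Rightarrow> real"
  assumes "set_borel_measurable M A f" "set_borel_measurable M A g"
  shows "set_borel_measurable M A (\<lambda>x. f x * g x)"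
proof -
  have "(\<lambda>x. (indicator A x *\<^sub>R f x) * (indicator A x *\<^sub>R g x)) \<in> borel_measurable M"
    using assms unfolding set_borel_measurable_def by measurable
  then show ?thesis
    unfolding set_borel_measurable_def
    by (rule measurable_cong[THEN iffD1, rotated]) (simp split: split_indicator)
qed

lemma borel_measurable_set_borel_measurable:
  fixes f :: "'a::euclidean_space \<Rightarrow> real"
  assumes "f \<in> borel_measurable borel" "A \<in> sets borel"
  shows "set_borel_measurable lborel A f"
  using assms unfolding set_borel_measurable_def by (simp add: borel_measurable_indicator')

lemma set_nn_integral_cmult_ennreal:
  fixes f :: "'a \<Rightarrow> real"
  assumes "set_borel_measurable M A f" "0 \<le> c"
  shows "(\<integral>\<^sup>+x\<in>A. ennreal (c * f x) \<partial>M) = ennreal c * (\<integral>\<^sup>+x\<in>A. ennreal (f x) \<partial>M)"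
  using nn_integral_cmult[OF set_borel_measurable_ennreal[OF assms(1)], of "ennreal c"] assms(2)
  by (simp add: ennreal_mult' mult.assoc)

lemma set_nn_integral_add_ennreal:
  fixes f g :: "'a \<Rightarrow> real"
  assumes "set_borel_measurable M A f" "set_borel_measurable M A g"
    and "\<And>x. x \<in> A \<Longrightarrow> 0 \<le> f x" "\<And>x. x \<in> A \<Longrightarrow> 0 \<le> g x"
  shows "(\<integral>\<^sup>+x\<in>A. ennreal (f x + g x) \<partial>M) = (\<integral>\<^sup>+x\<in>A. ennreal (f x) \<partial>M) + (\<integral>\<^sup>+x\<in>A. ennreal (g x) \<partial>M)"
proof -
  have "(\<integral>\<^sup>+x\<in>A. ennreal (f x + g x) \<partial>M)
      = (\<integral>\<^sup>+x. ennreal (f x) * indicator A x + ennreal (g x) * indicator A x \<partial>M)"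
    using assms(3,4) by (intro nn_integral_cong) (simp split: split_indicator)
  also have "\<dots> = (\<integral>\<^sup>+x\<in>A. ennreal (f x) \<partial>M) + (\<integral>\<^sup>+x\<in>A. ennreal (g x) \<partial>M)"
    using assms(1,2) by (intro nn_integral_add set_borel_measurable_ennreal)
  finally show ?thesis .
qed

lemma enn2real_set_nn_integral_proportional:
  fixes f n n' :: "'a \<Rightarrow> real"
  assumes "set_borel_measurable M A f" "set_borel_measurable M A n"
    and "0 \<le> l" "\<forall>x\<in>A. n' x = l * n x"
  shows "enn2real (\<integral>\<^sup>+x\<in>A. ennreal (f x * n' x) \<partial>M) = l * enn2real (\<integral>\<^sup>+x\<in>A. ennreal (f x * n x) \<partial>M)"
proof -
  have "(\<integral>\<^sup>+x\<in>A. ennreal (f x * n' x) \<partial>M) = (\<integral>\<^sup>+x\<in>A. ennreal (l * (f x * n x)) \<partial>M)"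
    using assms(4) by (intro set_nn_integral_cong) (auto simp: mult_ac)
  also have "\<dots> = ennreal l * (\<integral>\<^sup>+x\<in>A. ennreal (f x * n x) \<partial>M)"
    using assms(1-3) by (intro set_nn_integral_cmult_ennreal set_borel_measurable_mult)
  finally show ?thesis
    using assms(3) by (simp add: enn2real_mult)
qed

lemma set_nn_integral_eq_set_integral_nonneg:
  fixes f :: "'a \<Rightarrow> real"
  assumes "set_integrable M A f" "\<And>x. x \<in> A \<Longrightarrow> 0 \<le> f x"
  shows "(\<integral>\<^sup>+x\<in>A. ennreal (f x) \<partial>M) = ennreal (\<integral>x\<in>A. f x \<partial>M)"
proof -
  have "(\<integral>\<^sup>+x\<in>A. ennreal (f x) \<partial>M) = (\<integral>\<^sup>+x. ennreal (indicator A x *\<^sub>R f x) \<partial>M)"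
    by (intro nn_integral_cong) (simp split: split_indicator)
  also have "\<dots> = ennreal (\<integral>x\<in>A. f x \<partial>M)"
    unfolding set_lebesgue_integral_def using assms
    by (intro nn_integral_eq_integral) (auto simp: set_integrable_def split: split_indicator)
  finally show ?thesis .
qed

lemma set_nn_integral_exp_strict_antimono:
  fixes g :: "real \<Rightarrow> real"
  assumes g_meas: "set_borel_measurable lborel {0..} g" and g_nonneg: "\<forall>a\<ge>0. 0 \<le> g a"
    and g_nz: "(\<integral>\<^sup>+a\<in>{0..}. ennreal (g a) \<partial>lborel) \<noteq> 0"
    and fin: "(\<integral>\<^sup>+a\<in>{0..}. ennreal (g a * exp (- C2 * a)) \<partial>lborel) \<noteq> \<infinity>"
    and "C1 < C2"
  shows "(\<integral>\<^sup>+a\<in>{0..}. ennreal (g a * exp (- C2 * a)) \<partial>lborel)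
       < (\<integral>\<^sup>+a\<in>{0..}. ennreal (g a * exp (- C1 * a)) \<partial>lborel)"
proof -
  have exp_less: "exp (- C2 * a) < exp (- C1 * a)" if "0 < a" for a
    using \<open>C1 < C2\<close> that by simp
  have exp_le: "exp (- C2 * a) \<le> exp (- C1 * a)" if "0 \<le> a" for a
    using \<open>C1 < C2\<close> that by (simp add: mult_right_mono)
  have meas: "(\<lambda>a. ennreal (g a * exp (- C * a)) * indicator {0..} a) \<in> borel_measurable lborel" for C
    by (intro set_borel_measurable_ennreal set_borel_measurable_mult g_meas
        borel_measurable_set_borel_measurable) simp_all
  have "\<not> (AE a in lborel. ennreal (g a * exp (- C1 * a)) * indicator {0..} a
                          \<le> ennreal (g a * exp (- C2 * a)) * indicator {0..} a)"
  proof
    assume "AE a in lborel. ennreal (g a * exp (- C1 * a)) * indicator {0..} a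
                          \<le> ennreal (g a * exp (- C2 * a)) * indicator {0..} a"
    then have "AE a in lborel. ennreal (g a) * indicator {0..} a = 0"
      using AE_lborel_singleton[of 0]
    proof eventually_elim
      case (elim a)
      show ?case
      proof (cases "0 < a")
        case True
        then have "g a * exp (- C1 * a) \<le> g a * exp (- C2 * a)"
          using elim g_nonneg exp_gt_zero by (simp add: ennreal_le_iff)
        then have "g a \<le> 0"
          using exp_less[OF True] by (simp add: mult_le_cancel_left)
        then show ?thesis
          by (simp add: ennreal_eq_0_iff)
      qed (use elim in auto)
    qed
    then have "(\<integral>\<^sup>+a\<in>{0..}. ennreal (g a) \<partial>lborel) = 0"
      using nn_integral_0_iff_AE[OF set_borel_measurable_ennreal[OF g_meas]]
      by simp
    with g_nz show False ..
  qed
  moreover have "AE a in lborel. ennreal (g a * exp (- C2 * a)) * indicator {0..} a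
                              \<le> ennreal (g a * exp (- C1 * a)) * indicator {0..} a"
    using g_nonneg exp_le by (intro AE_I2) (simp add: ennreal_leI mult_left_mono split: split_indicator)
  ultimately show ?thesis
    using fin by (intro nn_integral_less meas)
qed

lemma set_nn_integral_exp_eq_one_unique:
  fixes g :: "real \<Rightarrow> real"
  assumes "set_borel_measurable lborel {0..} g" "\<forall>a\<ge>0. 0 \<le> g a"
    and "(\<integral>\<^sup>+a\<in>{0..}. ennreal (g a) \<partial>lborel) \<noteq> 0"
    and "(\<integral>\<^sup>+a\<in>{0..}. ennreal (g a * exp (- C1 * a)) \<partial>lborel) = 1"
    and "(\<integral>\<^sup>+a\<in>{0..}. ennreal (g a * exp (- C2 * a)) \<partial>lborel) = 1"
  shows "C1 = C2"
  using set_nn_integral_exp_strict_antimono[OF assms(1-3), of C1 C2]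
    set_nn_integral_exp_strict_antimono[OF assms(1-3), of C2 C1] assms(4,5)
  by (cases C1 C2 rule: linorder_cases) auto

lemma popsize_nonneg: "\<forall>a\<ge>0. 0 \<le> n a \<Longrightarrow> 0 \<le> popsize n"
  unfolding popsize_def set_lebesgue_integral_def
  by (intro Bochner_Integration.integral_nonneg) (simp split: split_indicator)

lemma popsize_scale: "\<forall>a\<ge>0. n' a = l * n a \<Longrightarrow> popsize n' = l * popsize n"
  unfolding popsize_def by (subst set_lebesgue_integral_cong[where g = "\<lambda>a. l * n a"]) auto

lemma popsize_zero: "\<forall>a\<ge>0. n a = 0 \<Longrightarrow> popsize n = 0"
  using popsize_scale[of n 0 n] by simp

lemma popsize_eq_nn_integral:
  assumes "\<forall>a\<ge>0. 0 \<le> n a" "set_integrable lborel {0..} n"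
  shows "(\<integral>\<^sup>+a\<in>{0..}. ennreal (n a) \<partial>lborel) = ennreal (popsize n)"
  unfolding popsize_def using assms by (intro set_nn_integral_eq_set_integral_nonneg) auto

lemma steady_state_nonneg:
  assumes "steady_state k b d eta1 eta2 c1 c2 ct1 ct2 wt n1 N2"
  shows "\<forall>a\<ge>0. 0 \<le> n1 a" "0 \<le> N2"
  using assms unfolding steady_state_def by auto

lemma steady_state_set_borel_measurable:
  "steady_state k b d eta1 eta2 c1 c2 ct1 ct2 wt n1 N2 \<Longrightarrow> set_borel_measurable lborel {0..} n1"
  unfolding steady_state_def set_integrable_def set_borel_measurable_def
  by (elim conjE) (rule borel_measurable_integrable)

lemma steady_state_popsize_zero:
  assumes S: "steady_state k b d eta1 eta2 c1 c2 ct1 ct2 wt n1 N2" and "popsize n1 = 0"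
  shows "\<forall>a\<ge>0. n1 a = 0"
proof -
  define B where "B = (\<integral>\<^sup>+a\<in>{0..}. ennreal (b a * n1 a) \<partial>lborel)"
  define C where "C = (eta1 + c1) * popsize n1 + (eta2 + c2) * N2"
  have integ: "set_integrable lborel {0..} n1"
    and profile: "\<forall>a\<ge>0. n1 a = enn2real B * surv k a * exp (- C * a)"
    using S unfolding steady_state_def Let_def B_def C_def by auto
  note nonneg = steady_state_nonneg(1)[OF S]
  have "AE a in lborel. ennreal (n1 a) * indicator {0..} a = 0"
    using popsize_eq_nn_integral[OF nonneg integ] \<open>popsize n1 = 0\<close>
      nn_integral_0_iff_AE[OF set_borel_measurable_ennreal[OF steady_state_set_borel_measurable[OF S]]]
    by simp
  then have "AE a in lborel. ennreal (b a * n1 a) * indicator {0..} a = 0"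
  proof eventually_elim
    case (elim a)
    then show ?case
      using nonneg by (force simp: ennreal_eq_0_iff split: split_indicator)
  qed
  then have "B = 0"
    unfolding B_def by (subst nn_integral_cong_AE[where v = "\<lambda>_. 0"]) simp_all
  then show ?thesis
    using profile by simp
qed

lemma steady_state_phase2_zero:
  assumes "0 < d" "0 \<le> ct2"
    and S: "steady_state k b d eta1 eta2 c1 c2 ct1 ct2 wt n1 N2" and n1_zero: "\<forall>a\<ge>0. n1 a = 0"
  shows "N2 = 0"
proof -
  have "ennreal ((d + ct1 * popsize n1 + ct2 * N2) * N2) =
      (\<integral>\<^sup>+a\<in>{0..}. ennreal ((k a + (if wt then eta1 * popsize n1 + eta2 * N2 else 0)) * n1 a) \<partial>lborel)"
    using S unfolding steady_state_def Let_def by auto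
  also have "\<dots> = 0"
    using n1_zero by (subst nn_integral_cong[where v = "\<lambda>_. 0"]) (simp_all split: split_indicator)
  finally have "(d + ct2 * N2) * N2 \<le> 0"
    using popsize_zero[OF n1_zero] by (simp add: ennreal_eq_0_iff)
  moreover have "0 \<le> N2"
    using S by (rule steady_state_nonneg)
  moreover from this have "0 < d + ct2 * N2"
    using assms by (simp add: add_pos_nonneg)
  ultimately show ?thesis
    by (simp add: mult_le_0_iff)
qed

lemma steady_state_popsize_pos:
  assumes "0 < d" "0 \<le> ct2"
    and S: "steady_state k b d eta1 eta2 c1 c2 ct1 ct2 wt n1 N2" "nontrivial n1 N2"
  shows "0 < popsize n1"
proof (rule ccontr)
  assume "\<not> 0 < popsize n1"
  then have "popsize n1 = 0"
    using popsize_nonneg[OF steady_state_nonneg(1)[OF S(1)]] by simp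
  then have n1_zero: "\<forall>a\<ge>0. n1 a = 0"
    using S(1) steady_state_popsize_zero by blast
  with steady_state_phase2_zero[OF assms(1,2) S(1)] S(2) show False
    unfolding nontrivial_def by auto
qed

lemma steady_state_profile:
  assumes b_meas: "set_borel_measurable lborel {0..} b" and b_nonneg: "\<forall>a\<ge>0. 0 \<le> b a"
    and S: "steady_state k b d eta1 eta2 c1 c2 ct1 ct2 wt n1 N2" and N1_pos: "0 < popsize n1"
  defines "C \<equiv> (eta1 + c1) * popsize n1 + (eta2 + c2) * N2"
  obtains \<beta> where "0 < \<beta>" "\<forall>a\<ge>0. n1 a = \<beta> * surv k a * exp (- C * a)"
    and "(\<integral>\<^sup>+a\<in>{0..}. ennreal (b a * surv k a * exp (- C * a)) \<partial>lborel) = 1"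
proof -
  define B where "B = (\<integral>\<^sup>+a\<in>{0..}. ennreal (b a * n1 a) \<partial>lborel)"
  define \<beta> where "\<beta> = enn2real B"
  have "B < \<infinity>" and profile: "\<forall>a\<ge>0. n1 a = \<beta> * surv k a * exp (- C * a)"
    using S unfolding steady_state_def Let_def B_def C_def \<beta>_def by auto
  then have B_eq: "B = ennreal \<beta>"
    unfolding \<beta>_def by simp
  have "0 < \<beta>"
  proof (rule ccontr)
    assume "\<not> 0 < \<beta>"
    then have "\<forall>a\<ge>0. n1 a = 0"
      using profile enn2real_nonneg[of B] unfolding \<beta>_def by simp
    then show False
      using popsize_zero N1_pos by simp
  qed
  have "ennreal \<beta> = ennreal \<beta> * (\<integral>\<^sup>+a\<in>{0..}. ennreal (b a * surv k a * exp (- C * a)) \<partial>lborel)"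
  proof -
    have "ennreal \<beta> = (\<integral>\<^sup>+a\<in>{0..}. ennreal (\<beta> * (b a * surv k a * exp (- C * a))) \<partial>lborel)"
      unfolding B_eq[symmetric] B_def using profile
      by (intro nn_integral_cong) (simp add: mult_ac split: split_indicator)
    also have "\<dots> = ennreal \<beta> * (\<integral>\<^sup>+a\<in>{0..}. ennreal (b a * surv k a * exp (- C * a)) \<partial>lborel)"
      using \<open>0 < \<beta>\<close>
      by (intro set_nn_integral_cmult_ennreal set_borel_measurable_mult b_meas
          borel_measurable_set_borel_measurable borel_measurable_surv) simp_all
    finally show ?thesis .
  qed
  then have "(\<integral>\<^sup>+a\<in>{0..}. ennreal (b a * surv k a * exp (- C * a)) \<partial>lborel) = 1"
    using \<open>0 < \<beta>\<close> ennreal_mult_cancel_left[of "ennreal \<beta>" 1] by simp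
  with \<open>0 < \<beta>\<close> profile show ?thesis
    by (rule that)
qed

lemma steady_state_balance:
  assumes k_meas: "set_borel_measurable lborel {0..} k" and k_nonneg: "\<forall>a\<ge>0. 0 \<le> k a"
    and "0 \<le> d" "0 \<le> eta1" "0 \<le> eta2" "0 \<le> ct1" "0 \<le> ct2"
    and S: "steady_state k b d eta1 eta2 c1 c2 ct1 ct2 wt n1 N2"
  defines "N1 \<equiv> popsize n1"
  shows "(d + ct1 * N1 + ct2 * N2) * N2 =
    enn2real (\<integral>\<^sup>+a\<in>{0..}. ennreal (k a * n1 a) \<partial>lborel) + (if wt then (eta1 * N1 + eta2 * N2) * N1 else 0)"
proof -
  define e where "e = (if wt then eta1 * N1 + eta2 * N2 else 0)"
  define K where "K = (\<integral>\<^sup>+a\<in>{0..}. ennreal (k a * n1 a) \<partial>lborel)"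
  have nonneg: "\<forall>a\<ge>0. 0 \<le> n1 a" and "0 \<le> N2" and integ: "set_integrable lborel {0..} n1"
    and balance: "ennreal ((d + ct1 * N1 + ct2 * N2) * N2) = (\<integral>\<^sup>+a\<in>{0..}. ennreal ((k a + e) * n1 a) \<partial>lborel)"
    using S unfolding steady_state_def Let_def N1_def e_def by auto
  have n1_meas: "set_borel_measurable lborel {0..} n1"
    using S by (rule steady_state_set_borel_measurable)
  have "0 \<le> N1"
    unfolding N1_def using nonneg by (rule popsize_nonneg)
  then have "0 \<le> e"
    unfolding e_def using assms \<open>0 \<le> N2\<close> by simp
  have "(\<integral>\<^sup>+a\<in>{0..}. ennreal ((k a + e) * n1 a) \<partial>lborel)
      = K + (\<integral>\<^sup>+a\<in>{0..}. ennreal (e * n1 a) \<partial>lborel)"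
    unfolding K_def distrib_right using k_nonneg nonneg \<open>0 \<le> e\<close>
    by (intro set_nn_integral_add_ennreal set_borel_measurable_mult k_meas n1_meas
        borel_measurable_set_borel_measurable) auto
  also have "(\<integral>\<^sup>+a\<in>{0..}. ennreal (e * n1 a) \<partial>lborel) = ennreal (e * N1)"
    using set_nn_integral_cmult_ennreal[OF n1_meas \<open>0 \<le> e\<close>] \<open>0 \<le> e\<close> \<open>0 \<le> N1\<close>
    unfolding N1_def popsize_eq_nn_integral[OF nonneg integ] by (simp add: ennreal_mult)
  finally have sum: "ennreal ((d + ct1 * N1 + ct2 * N2) * N2) = K + ennreal (e * N1)"
    using balance by simp
  then have "K \<noteq> \<infinity>"
    by (cases K) auto
  with sum have "ennreal ((d + ct1 * N1 + ct2 * N2) * N2) = ennreal (enn2real K + e * N1)"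
    using \<open>0 \<le> e\<close> \<open>0 \<le> N1\<close> by (simp add: ennreal_plus ennreal_enn2real less_top)
  moreover have "0 \<le> (d + ct1 * N1 + ct2 * N2) * N2"
    using assms \<open>0 \<le> N1\<close> \<open>0 \<le> N2\<close> by simp
  ultimately have "(d + ct1 * N1 + ct2 * N2) * N2 = enn2real K + e * N1"
    using \<open>0 \<le> e\<close> \<open>0 \<le> N1\<close> by (subst (asm) ennreal_inj) auto
  then show ?thesis
    unfolding K_def e_def by simp
qed

lemma nontrivial_steady_states_proportional:
  assumes "0 < d" "0 \<le> ct2"
    and b_meas: "set_borel_measurable lborel {0..} b" and b_nonneg: "\<forall>a\<ge>0. 0 \<le> b a"
    and R0_nz: "(\<integral>\<^sup>+a\<in>{0..}. ennreal (b a * surv k a) \<partial>lborel) \<noteq> 0"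
    and S: "steady_state k b d eta1 eta2 c1 c2 ct1 ct2 wt n1 N2" "nontrivial n1 N2"
    and S': "steady_state k b d eta1 eta2 c1 c2 ct1 ct2 wt' n1' N2'" "nontrivial n1' N2'"
  obtains l where "0 < l" "\<forall>a\<ge>0. n1' a = l * n1 a"
    and "(eta1 + c1) * popsize n1 + (eta2 + c2) * N2 = (eta1 + c1) * popsize n1' + (eta2 + c2) * N2'"
proof -
  define C where "C = (eta1 + c1) * popsize n1 + (eta2 + c2) * N2"
  define C' where "C' = (eta1 + c1) * popsize n1' + (eta2 + c2) * N2'"
  obtain \<beta> where \<beta>: "0 < \<beta>" "\<forall>a\<ge>0. n1 a = \<beta> * surv k a * exp (- C * a)"
    and char: "(\<integral>\<^sup>+a\<in>{0..}. ennreal (b a * surv k a * exp (- C * a)) \<partial>lborel) = 1"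
    using steady_state_profile[OF b_meas b_nonneg S(1) steady_state_popsize_pos[OF assms(1,2) S]]
    unfolding C_def .
  obtain \<beta>' where \<beta>': "0 < \<beta>'" "\<forall>a\<ge>0. n1' a = \<beta>' * surv k a * exp (- C' * a)"
    and char': "(\<integral>\<^sup>+a\<in>{0..}. ennreal (b a * surv k a * exp (- C' * a)) \<partial>lborel) = 1"
    using steady_state_profile[OF b_meas b_nonneg S'(1) steady_state_popsize_pos[OF assms(1,2) S']]
    unfolding C'_def .
  have "C = C'"
    using b_nonneg surv_nonneg R0_nz char char'
    by (intro set_nn_integral_exp_eq_one_unique[of "\<lambda>a. b a * surv k a"] set_borel_measurable_mult
        b_meas borel_measurable_set_borel_measurable borel_measurable_surv) (simp_all add: mult.assoc)
  with \<beta> \<beta>' have "\<forall>a\<ge>0. n1' a = \<beta>' / \<beta> * n1 a"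
    by simp
  with \<beta>(1) \<beta>'(1) \<open>C = C'\<close> show ?thesis
    unfolding C_def C'_def by (intro that[of "\<beta>' / \<beta>"]) simp_all
qed

lemma competition_transition_comparison:
  fixes d eta1 eta2 c1 c2 ct1 ct2 N1 N2 M1 M2 l K :: real
  assumes "0 < d" "0 < eta1" "0 \<le> eta2" "0 \<le> c1" "0 \<le> c2" "0 \<le> ct1" "0 \<le> ct2"
    and "0 < N1" "0 \<le> N2" "0 \<le> M2" "0 < l" "0 \<le> K"
    and with_transition: "(d + ct1 * N1 + ct2 * N2) * N2 = K + (eta1 * N1 + eta2 * N2) * N1"
    and without_transition: "(d + ct1 * M1 + ct2 * M2) * M2 = l * K"
    and M1_eq: "M1 = l * N1"
    and same_competition: "(eta1 + c1) * N1 + (eta2 + c2) * N2 = (eta1 + c1) * M1 + (eta2 + c2) * M2"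
  shows "N1 \<le> M1 \<and> M2 \<le> N2 \<and> (eta2 + c2 \<le> eta1 + c1 \<longleftrightarrow> M1 + M2 \<le> N1 + N2)"
proof -
  have c1tot_pos: "0 < eta1 + c1"
    using assms by simp
  have exchange: "(eta1 + c1) * (M1 - N1) = (eta2 + c2) * (N2 - M2)"
    using same_competition by (simp add: algebra_simps)
  have "M2 < N2"
  proof (rule ccontr)
    assume "\<not> M2 < N2"
    then have "(eta1 + c1) * (M1 - N1) \<le> 0"
      using exchange assms by (simp add: mult_nonneg_nonpos)
    then have "l \<le> 1"
      using c1tot_pos M1_eq \<open>0 < N1\<close> by (simp add: mult_le_0_iff)
    have "l * K < l * ((d + ct1 * N1 + ct2 * N2) * N2)"
      using with_transition assms by (simp add: add_pos_nonneg)
    also have "\<dots> = (l * d + ct1 * M1 + l * ct2 * N2) * N2"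
      by (simp add: M1_eq algebra_simps)
    also have "\<dots> \<le> (d + ct1 * M1 + ct2 * N2) * N2"
      using \<open>l \<le> 1\<close> assms by (intro mult_right_mono add_mono) (simp_all add: mult_left_le_one_le)
    also have "\<dots> \<le> (d + ct1 * M1 + ct2 * M2) * M2"
      using \<open>\<not> M2 < N2\<close> assms M1_eq by (intro mult_mono add_mono) simp_all
    finally show False
      using without_transition by simp
  qed
  then have "0 \<le> (eta1 + c1) * (M1 - N1)"
    using exchange assms by simp
  then have "N1 \<le> M1"
    using c1tot_pos by (simp add: zero_le_mult_iff)
  have "eta2 + c2 \<le> eta1 + c1 \<longleftrightarrow> (eta2 + c2) * (N2 - M2) \<le> (eta1 + c1) * (N2 - M2)"
    using \<open>M2 < N2\<close> by simp
  also have "\<dots> \<longleftrightarrow> (eta1 + c1) * (M1 - N1) \<le> (eta1 + c1) * (N2 - M2)"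
    using exchange by simp
  also have "\<dots> \<longleftrightarrow> M1 - N1 \<le> N2 - M2"
    using c1tot_pos by simp
  finally show ?thesis
    using \<open>M2 < N2\<close> \<open>N1 \<le> M1\<close> by linarith
qed

theorem proposition7:
  fixes k b :: "real \<Rightarrow> real" and d eta1 eta2 c1 c2 ct1 ct2 :: real
    and n1s n1ss :: "real \<Rightarrow> real" and N2s N2ss :: real
  assumes d_pos: "d > 0"
    and k_meas: "set_borel_measurable lborel {0..} k" and k_nonneg: "\<forall>a\<ge>0. k a \<ge> 0"
    and b_meas: "set_borel_measurable lborel {0..} b" and b_nonneg: "\<forall>a\<ge>0. b a \<ge> 0"
    and k_int: "(\<integral>\<^sup>+ a\<in>{0..}. ennreal (k a) \<partial>lborel) = \<infinity>"
    and b_bdd: "\<exists>M. AE a in lborel. a \<in> {0..} \<longrightarrow> \<bar>b a\<bar> \<le> M"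
    and R0_gt: "1 < (\<integral>\<^sup>+ a\<in>{0..}. ennreal (b a * surv k a) \<partial>lborel)"
    and R0_fin: "(\<integral>\<^sup>+ a\<in>{0..}. ennreal (b a * surv k a) \<partial>lborel) < \<infinity>"
    and eta1_pos: "eta1 > 0" and "eta2 \<ge> 0" and "c1 \<ge> 0" and "c2 \<ge> 0"
    and "ct1 \<ge> 0" and "ct2 \<ge> 0"
    and S: "steady_state k b d eta1 eta2 c1 c2 ct1 ct2 True n1s N2s" "nontrivial n1s N2s"
    and S': "steady_state k b d eta1 eta2 c1 c2 ct1 ct2 False n1ss N2ss" "nontrivial n1ss N2ss"
  shows "popsize n1ss \<ge> popsize n1s \<and> N2ss \<le> N2s \<and>
         (eta2 + c2 \<le> eta1 + c1 \<longleftrightarrow> popsize n1ss + N2ss \<le> popsize n1s + N2s)"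
proof -
  (* k_int, b_bdd and R0_fin serve in the paper to show that the steady states exist;
     here they are given, and comparing them only needs R0 > 1. *)
  have R0_nz: "(\<integral>\<^sup>+a\<in>{0..}. ennreal (b a * surv k a) \<partial>lborel) \<noteq> 0"
    using R0_gt by auto
  obtain l where l: "0 < l" "\<forall>a\<ge>0. n1ss a = l * n1s a"
    and same_competition: "(eta1 + c1) * popsize n1s + (eta2 + c2) * N2s
                         = (eta1 + c1) * popsize n1ss + (eta2 + c2) * N2ss"
    using nontrivial_steady_states_proportional[OF d_pos \<open>ct2 \<ge> 0\<close> b_meas b_nonneg R0_nz S S'] .
  define K where "K = enn2real (\<integral>\<^sup>+a\<in>{0..}. ennreal (k a * n1s a) \<partial>lborel)"
  have "0 \<le> K"
    unfolding K_def by simp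
  note balance = steady_state_balance[OF k_meas k_nonneg less_imp_le[OF d_pos] less_imp_le[OF eta1_pos]
      \<open>eta2 \<ge> 0\<close> \<open>ct1 \<ge> 0\<close> \<open>ct2 \<ge> 0\<close>]
  have with_transition: "(d + ct1 * popsize n1s + ct2 * N2s) * N2s
      = K + (eta1 * popsize n1s + eta2 * N2s) * popsize n1s"
    using balance[OF S(1)] unfolding K_def by simp
  have "enn2real (\<integral>\<^sup>+a\<in>{0..}. ennreal (k a * n1ss a) \<partial>lborel) = l * K"
    unfolding K_def using l
    by (intro enn2real_set_nn_integral_proportional k_meas steady_state_set_borel_measurable[OF S(1)]) auto
  then have without_transition: "(d + ct1 * popsize n1ss + ct2 * N2ss) * N2ss = l * K"
    using balance[OF S'(1)] by simp
  show ?thesis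
    using competition_transition_comparison[OF d_pos eta1_pos \<open>eta2 \<ge> 0\<close> \<open>c1 \<ge> 0\<close> \<open>c2 \<ge> 0\<close>
        \<open>ct1 \<ge> 0\<close> \<open>ct2 \<ge> 0\<close> steady_state_popsize_pos[OF d_pos \<open>ct2 \<ge> 0\<close> S]
        steady_state_nonneg(2)[OF S(1)] steady_state_nonneg(2)[OF S'(1)] l(1) \<open>0 \<le> K\<close>
        with_transition without_transition popsize_scale[OF l(2)] same_competition]
    by simp
qed

end
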